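(* Let $\Sigma$ be an alphabet and $(\mathcal{O},d)$ a pseudometric space. Then: (1) the mapping $T\mapsto V(T)$ extends to a functor $V:\mathbf{TS}_{\Sigma}\mathcal{O}\to\mathbf{Tr}_{\Sigma}\mathcal{O}$ which is a coreflection; (2) for every transition system with observations $X$, the morphism $\mathrm{unf}_X:V(X)\to X$ sending a run to its last state is a $0$-bounded $\mathbf{Lin}_{\Sigma}\mathcal{O}$-open morphism; (3) for every $\epsilon\ge0$, there is an $\epsilon$-approximate bisimulation between $T$ and $T'$ if and only if there is an $\epsilon$-approximate bisimulation between $V(T)$ and $V(T')$.
   Context: A transition system over $\Sigma$ is $(S,i,\Delta)$ with $i\in S$, $\Delta\subseteq S\times\Sigma\times S$; morphisms are functions on states preserving the initial state and transitions. A run of $(S,i,\Delta)$ is a sequence $i=q_0\xrightarrow{a_1}q_1\cdots\xrightarrow{a_n}q_n$ with $(q_{j-1},a_j,q_j)\in\Delta$. A synchronization tree is a transition system in which every state is the end of exactly one run (from the initial state). A transition system with observations is $(S,i,\Delta,\omega)$ with $\omega:S\to\mathcal{O}$; an $\epsilon$-bounded morphism is a transition system morphism $f$ with $d(\omega(s),\omega'(f(s)))\le\epsilon$ for all $s$, and a bounded morphism is one that is $\epsilon$-bounded for some $\epsilon\ge0$; these form the category $\mathbf{TS}_{\Sigma}\mathcal{O}$. $\mathbf{Tr}_{\Sigma}\mathcal{O}$ is its full subcategory of systems whose underlying transition system is a synchronization tree, and $\mathbf{Lin}_{\Sigma}\mathcal{O}$ its full subcategory of systems whose underlying transition system is a finite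 linear system $L(a_1\cdots a_n)$ (states $0,\dots,n$, initial $0$, transitions $(j-1,a_j,j)$). For $T=(S,i,\Delta,\omega)$, $V(T)$ has as states the runs of $T$, initial state the one-element run $i$, transitions $(\pi,a,\pi\xrightarrow{a}q)$ for each run $\pi$ ending in $q_n$ and each $(q_n,a,q)\in\Delta$, and observation $\omega(q_0\xrightarrow{a_1}\cdots\xrightarrow{a_n}q_n)=\omega(q_n)$. A functor is a coreflection if it is a right adjoint whose left adjoint is fully faithful (equivalently, a right adjoint whose adjunction unit is an isomorphism). A morphism $f:X\to Y$ is $\mathcal{P}$-open if for every $e:P\to P'$ in $\mathcal{P}$ and $p:P\to X$, $q':P'\to Y$ with $f\circ p=q'\circ e$ there is $q:P'\to X$ with $q\circ e=p$, $f\circ q=q'$. An $\epsilon$-approximate bisimulation between $(S,i,\Delta,\omega)$ and $(S',i',\Delta',\omega')$ is a strong bisimulation $R$ between the underlying transition systems (containing $(i,i')$ and satisfying the usual back-and-forth transfer conditions) with $d(\omega(s),\omega'(s'))\le\epsilon$ for all $(s,s')\in R$. *)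

theory Defs
  imports Main "HOL.Real"
begin

definition pseudometric :: "('o \<Rightarrow> 'o \<Rightarrow> real) \<Rightarrow> bool" where
  "pseudometric d \<longleftrightarrow>
     (\<forall>x. d x x = 0) \<and> (\<forall>x y. 0 \<le> d x y) \<and> (\<forall>x y. d x y = d y x) \<and>
     (\<forall>x y z. d x z \<le> d x y + d y z)"

record ('s, 'a, 'o) tso =
  St :: "'s set"
  init :: 's
  trans :: "('s \<times> 'a \<times> 's) set"
  obs :: "'s \<Rightarrow> 'o"

definition wf_tso :: "'a set \<Rightarrow> ('s, 'a, 'o) tso \<Rightarrow> bool" where
  "wf_tso \<Sigma> T \<longleftrightarrow> init T \<in> St T \<and> trans T \<subseteq> St T \<times> \<Sigma> \<times> St T"

text \<open>Morphisms of transition systems (functions on states; only their values on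
  the state set matter).\<close>
definition ts_morphism :: "('s, 'a, 'o) tso \<Rightarrow> ('t, 'a, 'o) tso \<Rightarrow> ('s \<Rightarrow> 't) \<Rightarrow> bool" where
  "ts_morphism T T' f \<longleftrightarrow>
     (\<forall>s\<in>St T. f s \<in> St T') \<and> f (init T) = init T' \<and>
     (\<forall>s a t. (s, a, t) \<in> trans T \<longrightarrow> (f s, a, f t) \<in> trans T')"

definition eps_bounded ::
  "('o \<Rightarrow> 'o \<Rightarrow> real) \<Rightarrow> real \<Rightarrow> ('s, 'a, 'o) tso \<Rightarrow> ('t, 'a, 'o) tso \<Rightarrow> ('s \<Rightarrow> 't) \<Rightarrow> bool" where
  "eps_bounded d \<epsilon> T T' f \<longleftrightarrow>
     ts_morphism T T' f \<and> (\<forall>s\<in>St T. d (obs T s) (obs T' (f s)) \<le> \<epsilon>)"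

definition bounded_morphism ::
  "('o \<Rightarrow> 'o \<Rightarrow> real) \<Rightarrow> ('s, 'a, 'o) tso \<Rightarrow> ('t, 'a, 'o) tso \<Rightarrow> ('s \<Rightarrow> 't) \<Rightarrow> bool" where
  "bounded_morphism d T T' f \<longleftrightarrow> (\<exists>\<epsilon>\<ge>0. eps_bounded d \<epsilon> T T' f)"

text \<open>A run q0 -a1-> q1 ... -an-> qn is represented as the pair (q0, [(a1,q1),...,(an,qn)]).\<close>
type_synonym ('s, 'a) run = "'s \<times> ('a \<times> 's) list"

fun path_from :: "('s \<times> 'a \<times> 's) set \<Rightarrow> 's \<Rightarrow> ('a \<times> 's) list \<Rightarrow> bool" where
  "path_from D q [] = True"
| "path_from D q ((a, q') # xs) = ((q, a, q') \<in> D \<and> path_from D q' xs)"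

definition is_run :: "('s, 'a, 'o) tso \<Rightarrow> ('s, 'a) run \<Rightarrow> bool" where
  "is_run T \<pi> \<longleftrightarrow> fst \<pi> = init T \<and> path_from (trans T) (fst \<pi>) (snd \<pi>)"

definition run_last :: "('s, 'a) run \<Rightarrow> 's" where
  "run_last \<pi> = (if snd \<pi> = [] then fst \<pi> else snd (last (snd \<pi>)))"

definition sync_tree :: "('s, 'a, 'o) tso \<Rightarrow> bool" where
  "sync_tree T \<longleftrightarrow> (\<forall>s\<in>St T. \<exists>!\<pi>. is_run T \<pi> \<and> run_last \<pi> = s)"

definition V :: "('s, 'a, 'o) tso \<Rightarrow> (('s, 'a) run, 'a, 'o) tso" where
  "V T = \<lparr> St = {\<pi>. is_run T \<pi>},
           init = (init T, []),
           trans = {(\<pi>, a, (fst \<pi>, snd \<pi> @ [(a, q)])) | \<pi> a q.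
                      is_run T \<pi> \<and> (run_last \<pi>, a, q) \<in> trans T},
           obs = (\<lambda>\<pi>. obs T (run_last \<pi>)) \<rparr>"

definition V_mor :: "('s \<Rightarrow> 't) \<Rightarrow> ('s, 'a) run \<Rightarrow> ('t, 'a) run" where
  "V_mor f \<pi> = (f (fst \<pi>), map (\<lambda>(a, q). (a, f q)) (snd \<pi>))"

abbreviation unf :: "('s, 'a) run \<Rightarrow> 's" where
  "unf \<equiv> run_last"

definition lin_sys :: "'a list \<Rightarrow> (nat \<Rightarrow> 'o) \<Rightarrow> (nat, 'a, 'o) tso" where
  "lin_sys w om = \<lparr> St = {0..length w}, init = 0,
                     trans = {(j, w ! j, Suc j) | j. j < length w}, obs = om \<rparr>"

definition lin_open ::
  "'a set \<Rightarrow> ('o \<Rightarrow> 'o \<Rightarrow> real) \<Rightarrow> ('s, 'a, 'o) tso \<Rightarrow> ('t, 'a, 'o) tso \<Rightarrow> ('s \<Rightarrow> 't) \<Rightarrow> bool" where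
  "lin_open \<Sigma> d X Y f \<longleftrightarrow>
     (\<forall>w om w' om' e p q'.
        set w \<subseteq> \<Sigma> \<longrightarrow> set w' \<subseteq> \<Sigma> \<longrightarrow>
        bounded_morphism d (lin_sys w om) (lin_sys w' om') e \<longrightarrow>
        bounded_morphism d (lin_sys w om) X p \<longrightarrow>
        bounded_morphism d (lin_sys w' om') Y q' \<longrightarrow>
        (\<forall>j\<in>St (lin_sys w om). f (p j) = q' (e j)) \<longrightarrow>
        (\<exists>q. bounded_morphism d (lin_sys w' om') X q \<and>
             (\<forall>j\<in>St (lin_sys w om). q (e j) = p j) \<and>
             (\<forall>j\<in>St (lin_sys w' om'). f (q j) = q' j)))"

definition approx_bisim ::
  "('o \<Rightarrow> 'o \<Rightarrow> real) \<Rightarrow> real \<Rightarrow> ('s, 'a, 'o) tso \<Rightarrow> ('t, 'a, 'o) tso \<Rightarrow> ('s \<times> 't) set \<Rightarrow> bool" where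
  "approx_bisim d \<epsilon> T T' R \<longleftrightarrow>
     R \<subseteq> St T \<times> St T' \<and> (init T, init T') \<in> R \<and>
     (\<forall>(s, s')\<in>R. \<forall>a t. (s, a, t) \<in> trans T \<longrightarrow> (\<exists>t'. (s', a, t') \<in> trans T' \<and> (t, t') \<in> R)) \<and>
     (\<forall>(s, s')\<in>R. \<forall>a t'. (s', a, t') \<in> trans T' \<longrightarrow> (\<exists>t. (s, a, t) \<in> trans T \<and> (t, t') \<in> R)) \<and>
     (\<forall>(s, s')\<in>R. d (obs T s) (obs T' s') \<le> \<epsilon>)"

end

theory Submission
  imports Defs
begin

text \<open>A run of V T is determined by its last state \<pi>: it has to pass through all prefixes
  of \<pi>. Hence V T is a synchronization tree. Conversely, every state of a synchronization
  tree T is the end of a unique run, so a morphism f : T \<rightarrow> X lifts through unf in exactly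
  one way, namely by applying f statewise to that run; this is the coreflection, and the
  Lin-openness of unf is the special case where T is a finite linear system. Approximate
  bisimulations are transported to V by relating runs with related last states, and back
  by taking last states.\<close>

definition run_extend :: "('s, 'a) run \<Rightarrow> 'a \<Rightarrow> 's \<Rightarrow> ('s, 'a) run" where
  "run_extend \<pi> a q = (fst \<pi>, snd \<pi> @ [(a, q)])"

lemma run_last_Nil [simp]: "run_last (q, []) = q"
  by (simp add: run_last_def)

lemma run_last_run_extend [simp]: "run_last (run_extend \<pi> a q) = q"
  by (simp add: run_last_def run_extend_def)

lemma path_from_snoc [simp]:
  "path_from D q (xs @ [(a, t)]) \<longleftrightarrow> path_from D q xs \<and> (run_last (q, xs), a, t) \<in> D"
  by (induction xs arbitrary: q) (auto simp: run_last_def split: if_splits)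

lemma is_run_Nil [simp]: "is_run T (q, []) \<longleftrightarrow> q = init T"
  by (simp add: is_run_def)

lemma is_run_run_extend [simp]:
  "is_run T (run_extend \<pi> a q) \<longleftrightarrow> is_run T \<pi> \<and> (run_last \<pi>, a, q) \<in> trans T"
  by (cases \<pi>) (simp add: is_run_def run_extend_def)

lemma run_induct [consumes 1, case_names Nil extend]:
  assumes "is_run T \<pi>"
    and "P (init T, [])"
    and "\<And>\<pi> a q. is_run T \<pi> \<Longrightarrow> (run_last \<pi>, a, q) \<in> trans T \<Longrightarrow> P \<pi> \<Longrightarrow> P (run_extend \<pi> a q)"
  shows "P \<pi>"
proof -
  obtain xs where \<pi>: "\<pi> = (init T, xs)"
    using assms(1) by (metis is_run_def prod.collapse)
  have "is_run T (init T, xs) \<Longrightarrow> P (init T, xs)"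
  proof (induction xs rule: rev_induct)
    case (snoc x xs)
    then show ?case
      using assms(3)[of "(init T, xs)" "fst x" "snd x"]
      by (cases x) (simp add: run_extend_def is_run_def)
  qed (use assms(2) in simp)
  then show ?thesis using assms(1) \<pi> by simp
qed

lemma run_last_in_St:
  assumes "wf_tso \<Sigma> T" "is_run T \<pi>"
  shows "run_last \<pi> \<in> St T"
  using assms(2) by (induction rule: run_induct) (use assms(1) in \<open>auto simp: wf_tso_def\<close>)

lemma St_V [simp]: "St (V T) = {\<pi>. is_run T \<pi>}"
  by (simp add: V_def)

lemma init_V [simp]: "init (V T) = (init T, [])"
  by (simp add: V_def)

lemma obs_V [simp]: "obs (V T) \<pi> = obs T (run_last \<pi>)"
  by (simp add: V_def)

lemma trans_V:
  "(\<pi>, a, \<tau>) \<in> trans (V T) \<longleftrightarrow>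
     is_run T \<pi> \<and> (\<exists>q. \<tau> = run_extend \<pi> a q \<and> (run_last \<pi>, a, q) \<in> trans T)"
  by (auto simp: V_def run_extend_def)

lemma wf_tso_V: "wf_tso \<Sigma> T \<Longrightarrow> wf_tso \<Sigma> (V T)"
  by (auto simp: wf_tso_def trans_V)

definition prefix_run :: "('s, 'a, 'o) tso \<Rightarrow> ('s, 'a) run \<Rightarrow> (('s, 'a) run, 'a) run" where
  "prefix_run T \<pi> =
     ((init T, []), map (\<lambda>k. (fst (snd \<pi> ! k), (fst \<pi>, take (Suc k) (snd \<pi>)))) [0..<length (snd \<pi>)])"

lemma prefix_run_Nil [simp]: "prefix_run T (q, []) = ((init T, []), [])"
  by (simp add: prefix_run_def)

lemma prefix_run_run_extend [simp]:
  "prefix_run T (run_extend \<pi> a q) = run_extend (prefix_run T \<pi>) a (run_extend \<pi> a q)"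
  by (simp add: prefix_run_def run_extend_def nth_append)

lemma run_V_eq_prefix_run:
  assumes "is_run (V T) \<Pi>"
  shows "\<Pi> = prefix_run T (run_last \<Pi>)"
  using assms by (induction rule: run_induct) (auto simp: trans_V)

lemma prefix_run_is_run_V:
  assumes "is_run T \<pi>"
  shows "is_run (V T) (prefix_run T \<pi>) \<and> run_last (prefix_run T \<pi>) = \<pi>"
  using assms by (induction rule: run_induct) (auto simp: trans_V)

lemma sync_tree_V: "sync_tree (V T)"
  unfolding sync_tree_def
proof
  fix \<pi> assume "\<pi> \<in> St (V T)"
  then show "\<exists>!\<Pi>. is_run (V T) \<Pi> \<and> run_last \<Pi> = \<pi>"
    using prefix_run_is_run_V run_V_eq_prefix_run by (metis mem_Collect_eq St_V)
qed

lemma V_mor_Nil [simp]: "V_mor f (q, []) = (f q, [])"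
  by (simp add: V_mor_def)

lemma V_mor_run_extend [simp]: "V_mor f (run_extend \<pi> a q) = run_extend (V_mor f \<pi>) a (f q)"
  by (simp add: V_mor_def run_extend_def)

lemma run_last_V_mor [simp]: "run_last (V_mor f \<pi>) = f (run_last \<pi>)"
  by (simp add: V_mor_def run_last_def last_map case_prod_unfold)

lemma V_mor_id [simp]: "V_mor id \<pi> = \<pi>"
  by (simp add: V_mor_def case_prod_unfold)

lemma V_mor_comp: "V_mor (g \<circ> f) \<pi> = V_mor g (V_mor f \<pi>)"
  by (simp add: V_mor_def case_prod_unfold)

lemma is_run_V_mor:
  assumes "ts_morphism T X f" "is_run T \<pi>"
  shows "is_run X (V_mor f \<pi>)"
  using assms(2) by (induction rule: run_induct) (use assms(1) in \<open>auto simp: ts_morphism_def\<close>)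

lemma ts_morphism_V_mor:
  assumes "ts_morphism T X f"
  shows "ts_morphism (V T) (V X) (V_mor f)"
  using assms is_run_V_mor[OF assms] by (auto simp: ts_morphism_def trans_V)

lemma eps_bounded_V_mor:
  assumes "wf_tso \<Sigma> T" "eps_bounded d \<epsilon> T X f"
  shows "eps_bounded d \<epsilon> (V T) (V X) (V_mor f)"
proof -
  have "ts_morphism (V T) (V X) (V_mor f)"
    using assms(2) ts_morphism_V_mor unfolding eps_bounded_def by blast
  then show ?thesis
    using assms(2) run_last_in_St[OF assms(1)] unfolding eps_bounded_def by simp
qed

lemma bounded_morphism_V_mor:
  "wf_tso \<Sigma> T \<Longrightarrow> bounded_morphism d T X f \<Longrightarrow> bounded_morphism d (V T) (V X) (V_mor f)"
  using eps_bounded_V_mor unfolding bounded_morphism_def by blast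

lemma eps_bounded_unf:
  assumes "pseudometric d" "wf_tso \<Sigma> X"
  shows "eps_bounded d 0 (V X) X unf"
  using assms run_last_in_St[OF assms(2)]
  by (auto simp: eps_bounded_def ts_morphism_def pseudometric_def trans_V)

definition tree_run :: "('s, 'a, 'o) tso \<Rightarrow> 's \<Rightarrow> ('s, 'a) run" where
  "tree_run T s = (THE \<pi>. is_run T \<pi> \<and> run_last \<pi> = s)"

lemma
  assumes "sync_tree T" "s \<in> St T"
  shows is_run_tree_run: "is_run T (tree_run T s)"
    and run_last_tree_run: "run_last (tree_run T s) = s"
proof -
  have "\<exists>!\<pi>. is_run T \<pi> \<and> run_last \<pi> = s" using assms by (simp add: sync_tree_def)
  then have "is_run T (tree_run T s) \<and> run_last (tree_run T s) = s"
    unfolding tree_run_def by (rule theI')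
  then show "is_run T (tree_run T s)" "run_last (tree_run T s) = s" by simp_all
qed

lemma tree_run_run_last:
  assumes "wf_tso \<Sigma> T" "sync_tree T" "is_run T \<pi>"
  shows "tree_run T (run_last \<pi>) = \<pi>"
  using assms is_run_tree_run run_last_tree_run run_last_in_St unfolding sync_tree_def by metis

lemma eps_bounded_lift:
  assumes "wf_tso \<Sigma> T" "sync_tree T" "eps_bounded d \<epsilon> T X f"
  shows "eps_bounded d \<epsilon> T (V X) (\<lambda>s. V_mor f (tree_run T s))"
proof -
  have f: "ts_morphism T X f" using assms(3) by (simp add: eps_bounded_def)
  have "tree_run T (init T) = (init T, [])"
    using tree_run_run_last[OF assms(1,2), of "(init T, [])"] by simp
  moreover have "(V_mor f (tree_run T s), a, V_mor f (tree_run T t)) \<in> trans (V X)"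
    if "(s, a, t) \<in> trans T" for s a t
  proof -
    have "s \<in> St T" using that assms(1) by (auto simp: wf_tso_def)
    then have run: "is_run T (run_extend (tree_run T s) a t)"
      using that is_run_tree_run[OF assms(2)] run_last_tree_run[OF assms(2)] by simp
    then have "tree_run T t = run_extend (tree_run T s) a t"
      using tree_run_run_last[OF assms(1,2)] by fastforce
    then show ?thesis
      using run is_run_V_mor[OF f] f that by (auto simp: trans_V ts_morphism_def)
  qed
  ultimately show ?thesis
    using assms(3) f is_run_tree_run[OF assms(2)] run_last_tree_run[OF assms(2)] is_run_V_mor[OF f]
    by (auto simp: eps_bounded_def ts_morphism_def)
qed

lemma lift_unique:
  assumes "wf_tso \<Sigma> T" "sync_tree T" "ts_morphism T (V X) h"
    and lifts: "\<forall>s\<in>St T. unf (h s) = f s" and "s \<in> St T"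
  shows "h s = V_mor f (tree_run T s)"
proof -
  have "h (run_last \<pi>) = V_mor f \<pi>" if "is_run T \<pi>" for \<pi>
    using that
  proof (induction rule: run_induct)
    case Nil
    have "init T \<in> St T" using assms(1) by (simp add: wf_tso_def)
    then show ?case using assms(3) lifts by (metis init_V run_last_Nil ts_morphism_def V_mor_Nil)
  next
    case (extend \<pi> a q)
    have "(h (run_last \<pi>), a, h q) \<in> trans (V X)" using assms(3) extend(2) by (simp add: ts_morphism_def)
    then obtain r where "h q = run_extend (h (run_last \<pi>)) a r" by (auto simp: trans_V)
    moreover have "q \<in> St T" using extend(2) assms(1) by (auto simp: wf_tso_def)
    ultimately show ?case using lifts extend(3) by force
  qed
  then show ?thesis using is_run_tree_run[OF assms(2,5)] run_last_tree_run[OF assms(2,5)] by metis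
qed

lemma lift_through_unf:
  assumes "wf_tso \<Sigma> T" "sync_tree T" "bounded_morphism d T X f"
  shows "\<exists>g. bounded_morphism d T (V X) g \<and> (\<forall>s\<in>St T. unf (g s) = f s) \<and>
           (\<forall>g'. bounded_morphism d T (V X) g' \<and> (\<forall>s\<in>St T. unf (g' s) = f s) \<longrightarrow>
                 (\<forall>s\<in>St T. g' s = g s))"
proof (intro exI conjI allI impI ballI)
  show "bounded_morphism d T (V X) (\<lambda>s. V_mor f (tree_run T s))"
    using assms eps_bounded_lift unfolding bounded_morphism_def by blast
  show "unf (V_mor f (tree_run T s)) = f s" if "s \<in> St T" for s
    using run_last_tree_run[OF assms(2) that] by simp
  show "g' s = V_mor f (tree_run T s)"
    if "bounded_morphism d T (V X) g' \<and> (\<forall>s\<in>St T. unf (g' s) = f s)" and "s \<in> St T" for g' s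
    using that lift_unique[OF assms(1,2)] by (auto simp: bounded_morphism_def eps_bounded_def)
qed

lemma tree_iso_V:
  assumes "pseudometric d" "wf_tso \<Sigma> T" "sync_tree T"
  shows "\<exists>h. bounded_morphism d T (V T) h \<and> (\<forall>s\<in>St T. unf (h s) = s) \<and>
           (\<forall>\<pi>\<in>St (V T). h (unf \<pi>) = \<pi>)"
proof (intro exI conjI ballI)
  have "eps_bounded d 0 T T id"
    using assms(1) by (auto simp: eps_bounded_def ts_morphism_def pseudometric_def)
  then show "bounded_morphism d T (V T) (tree_run T)"
    using eps_bounded_lift[OF assms(2,3)] unfolding bounded_morphism_def by fastforce
qed (use is_run_tree_run[OF assms(3)] run_last_tree_run[OF assms(3)]
        tree_run_run_last[OF assms(2,3)] in auto)

lemma St_lin_sys [simp]: "St (lin_sys w om) = {0..length w}"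
  by (simp add: lin_sys_def)

lemma init_lin_sys [simp]: "init (lin_sys w om) = 0"
  by (simp add: lin_sys_def)

lemma trans_lin_sys:
  "(i, a, j) \<in> trans (lin_sys w om) \<longleftrightarrow> i < length w \<and> a = w ! i \<and> j = Suc i"
  by (auto simp: lin_sys_def)

lemma wf_tso_lin_sys: "set w \<subseteq> \<Sigma> \<Longrightarrow> wf_tso \<Sigma> (lin_sys w om)"
  by (auto simp: wf_tso_def trans_lin_sys)

definition lin_run :: "'a list \<Rightarrow> nat \<Rightarrow> (nat, 'a) run" where
  "lin_run w j = (0, map (\<lambda>k. (w ! k, Suc k)) [0..<j])"

lemma lin_run_0 [simp]: "lin_run w 0 = (0, [])"
  by (simp add: lin_run_def)

lemma lin_run_Suc: "lin_run w (Suc j) = run_extend (lin_run w j) (w ! j) (Suc j)"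
  by (simp add: lin_run_def run_extend_def)

lemma run_last_lin_run [simp]: "run_last (lin_run w j) = j"
  by (cases j) (simp_all add: lin_run_Suc)

lemma is_run_lin_run: "j \<le> length w \<Longrightarrow> is_run (lin_sys w om) (lin_run w j)"
  by (induction j) (simp_all add: lin_run_Suc trans_lin_sys)

lemma run_lin_sys_eq_lin_run:
  assumes "is_run (lin_sys w om) \<pi>"
  shows "\<pi> = lin_run w (run_last \<pi>)"
  using assms by (induction rule: run_induct) (auto simp: trans_lin_sys lin_run_Suc)

lemma sync_tree_lin_sys: "sync_tree (lin_sys w om)"
  unfolding sync_tree_def
proof
  fix j assume "j \<in> St (lin_sys w om)"
  then show "\<exists>!\<pi>. is_run (lin_sys w om) \<pi> \<and> run_last \<pi> = j"
    using is_run_lin_run run_lin_sys_eq_lin_run by (metis St_lin_sys atLeastAtMost_iff run_last_lin_run)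
qed

lemma ts_morphism_comp:
  "ts_morphism A B f \<Longrightarrow> ts_morphism B C g \<Longrightarrow> ts_morphism A C (g \<circ> f)"
  by (simp add: ts_morphism_def)

lemma lin_open_unf:
  fixes X :: "('s, 'a, 'o) tso"
  shows "lin_open \<Sigma> d (V X) X unf"
  unfolding lin_open_def
proof (intro allI impI)
  fix w w' :: "'a list" and om om' :: "nat \<Rightarrow> 'o" and e p q'
  let ?L = "lin_sys w om" and ?L' = "lin_sys w' om'"
  assume "set w \<subseteq> \<Sigma>" "set w' \<subseteq> \<Sigma>"
    and e: "bounded_morphism d ?L ?L' e" and p: "bounded_morphism d ?L (V X) p"
    and q': "bounded_morphism d ?L' X q'" and square: "\<forall>j\<in>St ?L. unf (p j) = q' (e j)"
  then have L: "wf_tso \<Sigma> ?L" "sync_tree ?L" and L': "wf_tso \<Sigma> ?L'" "sync_tree ?L'"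
    using wf_tso_lin_sys sync_tree_lin_sys by blast+
  obtain q where q: "bounded_morphism d ?L' (V X) q" "\<forall>j\<in>St ?L'. unf (q j) = q' j"
    using lift_through_unf[OF L' q'] by blast
  have e: "ts_morphism ?L ?L' e" and p: "ts_morphism ?L (V X) p" and "ts_morphism ?L' (V X) q"
    using e p q(1) by (auto simp: bounded_morphism_def eps_bounded_def)
  then have qe: "ts_morphism ?L (V X) (q \<circ> e)" by (blast intro: ts_morphism_comp)
  have "q (e j) = p j" if j: "j \<in> St ?L" for j
  proof -
    \<comment> \<open>both are lifts of q' \<circ> e through unf\<close>
    have "\<forall>j\<in>St ?L. unf ((q \<circ> e) j) = (q' \<circ> e) j"
      using e q(2) by (simp add: ts_morphism_def)
    then have "(q \<circ> e) j = V_mor (q' \<circ> e) (tree_run ?L j)"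
      using lift_unique[OF L qe] j by blast
    moreover have "p j = V_mor (q' \<circ> e) (tree_run ?L j)"
      using lift_unique[OF L p] square j by simp
    ultimately show ?thesis by simp
  qed
  then show "\<exists>q. bounded_morphism d ?L' (V X) q \<and> (\<forall>j\<in>St ?L. q (e j) = p j) \<and>
               (\<forall>j\<in>St ?L'. unf (q j) = q' j)"
    using q by blast
qed

lemma approx_bisim_forth:
  "approx_bisim d \<epsilon> T T' R \<Longrightarrow> (s, s') \<in> R \<Longrightarrow> (s, a, t) \<in> trans T \<Longrightarrow>
     \<exists>t'. (s', a, t') \<in> trans T' \<and> (t, t') \<in> R"
  unfolding approx_bisim_def by blast

lemma approx_bisim_back:
  "approx_bisim d \<epsilon> T T' R \<Longrightarrow> (s, s') \<in> R \<Longrightarrow> (s', a, t') \<in> trans T' \<Longrightarrow>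
     \<exists>t. (s, a, t) \<in> trans T \<and> (t, t') \<in> R"
  unfolding approx_bisim_def by blast

lemma approx_bisim_obs:
  "approx_bisim d \<epsilon> T T' R \<Longrightarrow> (s, s') \<in> R \<Longrightarrow> d (obs T s) (obs T' s') \<le> \<epsilon>"
  unfolding approx_bisim_def by blast

lemma approx_bisimI:
  assumes "R \<subseteq> St T \<times> St T'" "(init T, init T') \<in> R"
    and "\<And>s s' a t. (s, s') \<in> R \<Longrightarrow> (s, a, t) \<in> trans T \<Longrightarrow> \<exists>t'. (s', a, t') \<in> trans T' \<and> (t, t') \<in> R"
    and "\<And>s s' a t'. (s, s') \<in> R \<Longrightarrow> (s', a, t') \<in> trans T' \<Longrightarrow> \<exists>t. (s, a, t) \<in> trans T \<and> (t, t') \<in> R"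
    and "\<And>s s'. (s, s') \<in> R \<Longrightarrow> d (obs T s) (obs T' s') \<le> \<epsilon>"
  shows "approx_bisim d \<epsilon> T T' R"
  unfolding approx_bisim_def using assms by blast

lemma approx_bisim_V:
  assumes R: "approx_bisim d \<epsilon> T T' R"
  shows "approx_bisim d \<epsilon> (V T) (V T')
           {(\<pi>, \<pi>'). is_run T \<pi> \<and> is_run T' \<pi>' \<and> (run_last \<pi>, run_last \<pi>') \<in> R}"
    (is "approx_bisim d \<epsilon> _ _ ?R")
proof (rule approx_bisimI)
  show "(init (V T), init (V T')) \<in> ?R" using R by (simp add: approx_bisim_def)
next
  fix \<pi> \<pi>' a \<tau> assume rel: "(\<pi>, \<pi>') \<in> ?R" and "(\<pi>, a, \<tau>) \<in> trans (V T)"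
  then obtain q where \<tau>: "\<tau> = run_extend \<pi> a q" "(run_last \<pi>, a, q) \<in> trans T"
    by (auto simp: trans_V)
  then obtain q' where "(run_last \<pi>', a, q') \<in> trans T'" "(q, q') \<in> R"
    using approx_bisim_forth[OF R] rel by blast
  then show "\<exists>\<tau>'. (\<pi>', a, \<tau>') \<in> trans (V T') \<and> (\<tau>, \<tau>') \<in> ?R"
    using rel \<tau> by (intro exI[of _ "run_extend \<pi>' a q'"]) (auto simp: trans_V)
next
  fix \<pi> \<pi>' a \<tau>' assume rel: "(\<pi>, \<pi>') \<in> ?R" and "(\<pi>', a, \<tau>') \<in> trans (V T')"
  then obtain q' where \<tau>': "\<tau>' = run_extend \<pi>' a q'" "(run_last \<pi>', a, q') \<in> trans T'"
    by (auto simp: trans_V)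
  then obtain q where "(run_last \<pi>, a, q) \<in> trans T" "(q, q') \<in> R"
    using approx_bisim_back[OF R] rel by blast
  then show "\<exists>\<tau>. (\<pi>, a, \<tau>) \<in> trans (V T) \<and> (\<tau>, \<tau>') \<in> ?R"
    using rel \<tau>' by (intro exI[of _ "run_extend \<pi> a q"]) (auto simp: trans_V)
qed (use approx_bisim_obs[OF R] in auto)

lemma approx_bisim_of_V:
  assumes "wf_tso \<Sigma> T" "wf_tso \<Sigma> T'" and R: "approx_bisim d \<epsilon> (V T) (V T') R"
  shows "approx_bisim d \<epsilon> T T' {(run_last \<pi>, run_last \<pi>') | \<pi> \<pi>'. (\<pi>, \<pi>') \<in> R}"
    (is "approx_bisim d \<epsilon> _ _ ?R")
proof (rule approx_bisimI)
  have "R \<subseteq> {\<pi>. is_run T \<pi>} \<times> {\<pi>. is_run T' \<pi>}" using R by (simp add: approx_bisim_def)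
  then show "?R \<subseteq> St T \<times> St T'"
    using run_last_in_St[OF assms(1)] run_last_in_St[OF assms(2)] by blast
  have "((init T, []), (init T', [])) \<in> R" using R by (simp add: approx_bisim_def)
  then show "(init T, init T') \<in> ?R" by force
next
  fix s s' a t assume "(s, s') \<in> ?R" and t: "(s, a, t) \<in> trans T"
  then obtain \<pi> \<pi>' where \<pi>: "s = run_last \<pi>" "s' = run_last \<pi>'" "(\<pi>, \<pi>') \<in> R" by blast
  then have "(\<pi>, a, run_extend \<pi> a t) \<in> trans (V T)"
    using R t by (auto simp: approx_bisim_def trans_V)
  then obtain \<tau>' where \<tau>': "(\<pi>', a, \<tau>') \<in> trans (V T')" "(run_extend \<pi> a t, \<tau>') \<in> R"
    using approx_bisim_forth[OF R \<pi>(3)] by blast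
  then obtain q' where "\<tau>' = run_extend \<pi>' a q'" "(s', a, q') \<in> trans T'"
    using \<pi>(2) by (auto simp: trans_V)
  moreover have "t = run_last (run_extend \<pi> a t)" by simp
  ultimately show "\<exists>t'. (s', a, t') \<in> trans T' \<and> (t, t') \<in> ?R"
    using \<tau>'(2) by (metis (mono_tags, lifting) CollectI run_last_run_extend)
next
  fix s s' a t' assume "(s, s') \<in> ?R" and t': "(s', a, t') \<in> trans T'"
  then obtain \<pi> \<pi>' where \<pi>: "s = run_last \<pi>" "s' = run_last \<pi>'" "(\<pi>, \<pi>') \<in> R" by blast
  then have "(\<pi>', a, run_extend \<pi>' a t') \<in> trans (V T')"
    using R t' by (auto simp: approx_bisim_def trans_V)
  then obtain \<tau> where \<tau>: "(\<pi>, a, \<tau>) \<in> trans (V T)" "(\<tau>, run_extend \<pi>' a t') \<in> R"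
    using approx_bisim_back[OF R \<pi>(3)] by blast
  then obtain q where "\<tau> = run_extend \<pi> a q" "(s, a, q) \<in> trans T"
    using \<pi>(1) by (auto simp: trans_V)
  then show "\<exists>t. (s, a, t) \<in> trans T \<and> (t, t') \<in> ?R"
    using \<tau>(2) by (metis (mono_tags, lifting) CollectI run_last_run_extend)
qed (use approx_bisim_obs[OF R] in auto)

lemma approx_bisim_V_iff:
  "wf_tso \<Sigma> T \<Longrightarrow> wf_tso \<Sigma> T' \<Longrightarrow>
     (\<exists>R. approx_bisim d \<epsilon> T T' R) \<longleftrightarrow> (\<exists>R. approx_bisim d \<epsilon> (V T) (V T') R)"
  using approx_bisim_V approx_bisim_of_V by blast

theorem proposition4:
  fixes \<Sigma> :: "'a set" and d :: "'o \<Rightarrow> 'o \<Rightarrow> real"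
  assumes "pseudometric d"
  shows
    \<comment> \<open>(1) V is a functor TS_Sigma O -> Tr_Sigma O ...\<close>
    "(\<forall>T :: ('s, 'a, 'o) tso. wf_tso \<Sigma> T \<longrightarrow> wf_tso \<Sigma> (V T) \<and> sync_tree (V T))
   \<and> (\<forall>(T :: ('s, 'a, 'o) tso) (T' :: ('t, 'a, 'o) tso) f.
        wf_tso \<Sigma> T \<longrightarrow> wf_tso \<Sigma> T' \<longrightarrow> bounded_morphism d T T' f \<longrightarrow>
        bounded_morphism d (V T) (V T') (V_mor f))
   \<and> (\<forall>T :: ('s, 'a, 'o) tso. wf_tso \<Sigma> T \<longrightarrow> (\<forall>\<pi>\<in>St (V T). V_mor id \<pi> = \<pi>))
   \<and> (\<forall>(T :: ('s, 'a, 'o) tso) (T' :: ('t, 'a, 'o) tso) (T'' :: ('u, 'a, 'o) tso) f g.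
        wf_tso \<Sigma> T \<longrightarrow> wf_tso \<Sigma> T' \<longrightarrow> wf_tso \<Sigma> T'' \<longrightarrow>
        bounded_morphism d T T' f \<longrightarrow> bounded_morphism d T' T'' g \<longrightarrow>
        (\<forall>\<pi>\<in>St (V T). V_mor (g \<circ> f) \<pi> = V_mor g (V_mor f \<pi>)))
    \<comment> \<open>... which is a coreflection: unf is a natural transformation from (inclusion o V)
        to the identity, universal from the inclusion Tr -> TS (so the inclusion is a
        fully faithful left adjoint of V), and its component at each tree is an iso\<close>
   \<and> (\<forall>(T :: ('s, 'a, 'o) tso) (T' :: ('t, 'a, 'o) tso) f.
        wf_tso \<Sigma> T \<longrightarrow> wf_tso \<Sigma> T' \<longrightarrow> bounded_morphism d T T' f \<longrightarrow>
        (\<forall>\<pi>\<in>St (V T). unf (V_mor f \<pi>) = f (unf \<pi>)))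
   \<and> (\<forall>(T :: ('t, 'a, 'o) tso) (X :: ('s, 'a, 'o) tso) f.
        wf_tso \<Sigma> T \<longrightarrow> sync_tree T \<longrightarrow> wf_tso \<Sigma> X \<longrightarrow> bounded_morphism d T X f \<longrightarrow>
        (\<exists>g. bounded_morphism d T (V X) g \<and> (\<forall>s\<in>St T. unf (g s) = f s) \<and>
             (\<forall>g'. bounded_morphism d T (V X) g' \<and> (\<forall>s\<in>St T. unf (g' s) = f s) \<longrightarrow>
                   (\<forall>s\<in>St T. g' s = g s))))
   \<and> (\<forall>T :: ('t, 'a, 'o) tso. wf_tso \<Sigma> T \<longrightarrow> sync_tree T \<longrightarrow>
        (\<exists>h. bounded_morphism d T (V T) h \<and> (\<forall>s\<in>St T. unf (h s) = s) \<and>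
             (\<forall>\<pi>\<in>St (V T). h (unf \<pi>) = \<pi>)))
    \<comment> \<open>(2) unf_X is a 0-bounded Lin-open morphism\<close>
   \<and> (\<forall>X :: ('s, 'a, 'o) tso. wf_tso \<Sigma> X \<longrightarrow>
        eps_bounded d 0 (V X) X unf \<and> lin_open \<Sigma> d (V X) X unf)
    \<comment> \<open>(3) approximate bisimilarity is reflected and preserved by V\<close>
   \<and> (\<forall>(\<epsilon>::real) (T :: ('s, 'a, 'o) tso) (T' :: ('t, 'a, 'o) tso).
        0 \<le> \<epsilon> \<longrightarrow> wf_tso \<Sigma> T \<longrightarrow> wf_tso \<Sigma> T' \<longrightarrow>
        ((\<exists>R. approx_bisim d \<epsilon> T T' R) \<longleftrightarrow> (\<exists>R. approx_bisim d \<epsilon> (V T) (V T') R)))"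
  by (intro conjI allI impI ballI)
    (simp_all add: wf_tso_V sync_tree_V bounded_morphism_V_mor V_mor_comp lift_through_unf
      tree_iso_V[OF assms] eps_bounded_unf[OF assms] lin_open_unf approx_bisim_V_iff del: St_V)

end
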